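(* Let $1\le d<n$ be integers and $\alpha>0$. Suppose $K\in C(\mathbb{R}^n\setminus\{0\})\cap L^\infty(\mathbb{R}^n)$ is $(d,\alpha)$-distance-exact and radial, i.e. $K(x)=\tilde K(|x|)$ for some $\tilde K\in C(0,\infty)\cap L^\infty(0,\infty)$. Then $K$ is constant.
   Context: For a $d$-plane $E$ and $x\notin E$, $D_{K,\mathcal H^d|_E,\alpha}(x)=\left(\int_E K(x-y)|x-y|^{-d-\alpha}d\mathcal H^d(y)\right)^{-1/\alpha}$. $K$ is $(d,\alpha)$-distance-exact if for each $d$-dimensional plane $E$ there is a constant $c_E$ with $D_{K,\mathcal H^d|_E,\alpha}(x)=c_E\operatorname{dist}(x,E)$ for all $x\notin E$. *)

theory Defs
  imports "HOL-Analysis.Analysis"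
begin

text \<open>An orthonormal parametrisation of a d-plane E: E = a + span of the
  orthonormal vectors v 0, ..., v (d-1), parametrised by t in R^d
  (functions nat => real on the index set {..<d}).\<close>
definition plane_frame :: "nat \<Rightarrow> 'a::euclidean_space set \<Rightarrow> 'a \<Rightarrow> (nat \<Rightarrow> 'a) \<Rightarrow> bool" where
  "plane_frame d E a v \<longleftrightarrow>
     (\<forall>i<d. \<forall>j<d. v i \<bullet> v j = (if i = j then 1 else 0)) \<and>
     E = (\<lambda>t. a + (\<Sum>i<d. t i *\<^sub>R v i)) ` UNIV"

definition d_plane :: "nat \<Rightarrow> 'a::euclidean_space set \<Rightarrow> bool" where
  "d_plane d E \<longleftrightarrow> affine E \<and> aff_dim E = int d"

text \<open>Integral over a d-plane E with respect to H^d restricted to E: the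
  d-dimensional Hausdorff measure on E is the image of Lebesgue measure on R^d
  under any orthonormal (isometric) parametrisation of E.\<close>
definition plane_hausdorff_integral ::
    "nat \<Rightarrow> 'a::euclidean_space set \<Rightarrow> ('a \<Rightarrow> real) \<Rightarrow> real" where
  "plane_hausdorff_integral d E f =
     (SOME I. \<exists>a v. plane_frame d E a v \<and>
        I = (\<integral>t. f (a + (\<Sum>i<d. t i *\<^sub>R v i)) \<partial>(PiM {..<d} (\<lambda>_. lborel))))"

definition D_plane :: "('a::euclidean_space \<Rightarrow> real) \<Rightarrow> nat \<Rightarrow> real \<Rightarrow> 'a set \<Rightarrow> 'a \<Rightarrow> real" where
  "D_plane K d \<alpha> E x =
     (plane_hausdorff_integral d E (\<lambda>y. K (x - y) * norm (x - y) powr (- (real d + \<alpha>))))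
       powr (- 1 / \<alpha>)"

definition distance_exact :: "('a::euclidean_space \<Rightarrow> real) \<Rightarrow> nat \<Rightarrow> real \<Rightarrow> bool" where
  "distance_exact K d \<alpha> \<longleftrightarrow>
     (\<forall>E. d_plane d E \<longrightarrow> (\<exists>c. \<forall>x. x \<notin> E \<longrightarrow> D_plane K d \<alpha> E x = c * infdist x E))"

end

theory Submission
  imports Defs "HOL-Real_Asymp.Real_Asymp"
begin

text \<open>
  Write T f \<sigma> = \<integral> f (\<sigma> + s^2) ds. For a coordinate d-plane E and a point x at
  distance r from E, orthonormal coordinates on E turn the integral defining D into
  (T^d H) (r^2), where H q = Kt (sqrt q) q^(-(d + \<alpha>)/2) for the radial profile Kt of K.
  Distance-exactness makes \<bar>T^d H \<rho>\<bar> a multiple of \<rho>^(-\<alpha>/2); being continuous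
  and either identically zero or nowhere zero, T^d H has constant sign, so
  T^d H \<rho> = \<mu> \<rho>^(-\<alpha>/2), which is also T^d of a multiple of q^(-(d + \<alpha>)/2).
  Finally T is injective on continuous functions with power decay: pairing T f with
  (\<sigma> - a)_+^(-1/2) - (\<sigma> - b)_+^(-1/2) and using \<integral> (w - s^2)_+^(-1/2) ds = \<pi>
  recovers the integrals of f over intervals. Hence H is a multiple of
  q^(-(d + \<alpha>)/2), i.e. Kt is constant.
\<close>

section \<open>Power integrals on the line\<close>

lemma set_integrable_powr_at_top:
  fixes e a :: real
  assumes "e < -1" and "a > 0"
  shows "set_integrable lborel {a..} (\<lambda>x. x powr e)"
proof -
  have "(\<lambda>x. x powr e) integrable_on {a..}"
    using has_integral_powr_to_inf[OF assms] by blast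
  then have "(\<lambda>x. x powr e) absolutely_integrable_on {a..}"
    by (rule nonnegative_absolutely_integrable_1) simp
  then show ?thesis
    by (simp add: absolutely_integrable_on_def set_integrable_def integrable_completion)
qed

lemma integrable_one_plus_square_powr:
  fixes \<gamma> :: real
  assumes "\<gamma> > 1/2"
  shows "integrable lborel (\<lambda>s. (1 + s\<^sup>2) powr -\<gamma>)"
proof -
  define m :: "real \<Rightarrow> real" where "m = (\<lambda>s. indicator {1..} s * s powr (-2*\<gamma>))"
  have "integrable lborel m"
    using set_integrable_powr_at_top[of "-2*\<gamma>" 1] assms by (simp add: set_integrable_def m_def)
  moreover from this have "integrable lborel (\<lambda>s. m (0 + (-1) * s))"
    by (rule lborel_integrable_real_affine) simp
  ultimately have "integrable lborel (\<lambda>s. indicator {-1..1} s + m s + m (-s))"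
    by simp
  then show ?thesis
  proof (rule Bochner_Integration.integrable_bound)
    show "AE s in lborel. norm ((1 + s\<^sup>2) powr -\<gamma>) \<le> norm (indicator {-1..1} s + m s + m (-s))"
    proof (rule AE_I2)
      fix s :: real
      have "(1 + s\<^sup>2) powr -\<gamma> \<le> indicator {-1..1} s + m s + m (-s)"
      proof (cases "\<bar>s\<bar> \<le> 1")
        case True
        have "(1 + s\<^sup>2) powr -\<gamma> \<le> 1"
          using powr_mono2'[of "-\<gamma>" 1 "1 + s\<^sup>2"] assms by simp
        moreover have "m s \<ge> 0" "m (-s) \<ge> 0"
          by (simp_all add: m_def)
        ultimately show ?thesis
          using True by (simp add: indicator_def abs_le_iff)
      next
        case False
        have "(1 + s\<^sup>2) powr -\<gamma> \<le> (\<bar>s\<bar> powr 2) powr -\<gamma>"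
          using False assms by (intro powr_mono2') auto
        also have "\<dots> = \<bar>s\<bar> powr (-2*\<gamma>)"
          by (simp add: powr_powr del: powr_numeral)
        finally show ?thesis
          using False by (cases "s > 0") (auto simp: m_def indicator_def)
      qed
      then show "norm ((1 + s\<^sup>2) powr -\<gamma>) \<le> norm (indicator {-1..1} s + m s + m (-s))"
        by (simp add: m_def)
    qed
  qed measurable
qed

definition abel_const :: "real \<Rightarrow> real" where
  "abel_const \<gamma> = (\<integral>s. (1 + s\<^sup>2) powr -\<gamma> \<partial>lborel)"

lemma abel_const_pos:
  assumes "\<gamma> > 1/2"
  shows "abel_const \<gamma> > 0"
proof -
  have "(\<integral>s. indicator {0..1::real} s * 2 powr -\<gamma> \<partial>lborel) \<le> abel_const \<gamma>"
    unfolding abel_const_def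
  proof (rule Bochner_Integration.integral_mono)
    show "indicator {0..1} s * 2 powr -\<gamma> \<le> (1 + s\<^sup>2) powr -\<gamma>" for s :: real
      using assms by (auto simp: indicator_def add_pos_nonneg intro!: powr_mono2' power_le_one)
  qed (use integrable_one_plus_square_powr[OF assms] in simp_all)
  moreover have "(\<integral>s. indicator {0..1::real} s * 2 powr -\<gamma> \<partial>lborel) = 2 powr -\<gamma>"
    by simp
  ultimately show ?thesis
    by (metis powr_gt_zero order_less_le_trans zero_neq_numeral)
qed

lemma integral_powr_plus_square:
  fixes \<gamma> \<sigma> :: real
  assumes "\<gamma> > 1/2" and "\<sigma> > 0"
  shows "integrable lborel (\<lambda>s. (\<sigma> + s\<^sup>2) powr -\<gamma>)"
    and "(\<integral>s. (\<sigma> + s\<^sup>2) powr -\<gamma> \<partial>lborel) = abel_const \<gamma> * \<sigma> powr (1/2 - \<gamma>)"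
proof -
  have sqrt_nz: "sqrt \<sigma> \<noteq> 0"
    using assms by simp
  have scaled: "(\<sigma> + (0 + sqrt \<sigma> * s)\<^sup>2) powr -\<gamma> = \<sigma> powr -\<gamma> * (1 + s\<^sup>2) powr -\<gamma>" for s
  proof -
    have "\<sigma> + (0 + sqrt \<sigma> * s)\<^sup>2 = \<sigma> * (1 + s\<^sup>2)"
      using assms by (simp add: algebra_simps)
    then show ?thesis
      using assms by (simp add: powr_mult add_pos_nonneg)
  qed
  have "integrable lborel (\<lambda>s. (\<sigma> + (0 + sqrt \<sigma> * s)\<^sup>2) powr -\<gamma>)"
    unfolding scaled using integrable_one_plus_square_powr[OF assms(1)] by simp
  then show "integrable lborel (\<lambda>s. (\<sigma> + s\<^sup>2) powr -\<gamma>)"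
    using lborel_integrable_real_affine_iff[OF sqrt_nz, of "\<lambda>s. (\<sigma> + s\<^sup>2) powr -\<gamma>" 0] by simp
  have "(\<integral>s. (\<sigma> + s\<^sup>2) powr -\<gamma> \<partial>lborel)
      = \<bar>sqrt \<sigma>\<bar> *\<^sub>R (\<integral>s. (\<sigma> + (0 + sqrt \<sigma> * s)\<^sup>2) powr -\<gamma> \<partial>lborel)"
    by (rule lborel_integral_real_affine[OF sqrt_nz])
  also have "\<dots> = abel_const \<gamma> * (sqrt \<sigma> * \<sigma> powr -\<gamma>)"
    unfolding scaled abel_const_def using assms by simp
  also have "sqrt \<sigma> * \<sigma> powr -\<gamma> = \<sigma> powr (1/2 - \<gamma>)"
    using assms by (simp add: powr_half_sqrt[symmetric] powr_add[symmetric])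
  finally show "(\<integral>s. (\<sigma> + s\<^sup>2) powr -\<gamma> \<partial>lborel) = abel_const \<gamma> * \<sigma> powr (1/2 - \<gamma>)" .
qed

section \<open>The Abel transform\<close>

text \<open>Substituting v = \<sigma> + s^2 gives abel_transform f \<sigma> = \<integral> f v (v - \<sigma>)^(-1/2) dv over v > \<sigma>.\<close>

definition abel_transform :: "(real \<Rightarrow> real) \<Rightarrow> real \<Rightarrow> real" where
  "abel_transform f \<sigma> = (\<integral>s. f (\<sigma> + s\<^sup>2) \<partial>lborel)"

definition power_decay :: "real \<Rightarrow> (real \<Rightarrow> real) \<Rightarrow> bool" where
  "power_decay \<gamma> f \<longleftrightarrow> f \<in> borel_measurable borel \<and> continuous_on {0<..} f \<and>
     (\<exists>M. \<forall>v>0. \<bar>f v\<bar> \<le> M * v powr -\<gamma>)"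

lemma power_decayI:
  assumes "f \<in> borel_measurable borel" and "continuous_on {0<..} f"
    and "\<And>v. v > 0 \<Longrightarrow> \<bar>f v\<bar> \<le> M * v powr -\<gamma>"
  shows "power_decay \<gamma> f"
  using assms unfolding power_decay_def by blast

lemma power_decayE:
  assumes "power_decay \<gamma> f"
  obtains M where "f \<in> borel_measurable borel" and "continuous_on {0<..} f" and "M \<ge> 0"
    and "\<And>v. v > 0 \<Longrightarrow> \<bar>f v\<bar> \<le> M * v powr -\<gamma>"
proof -
  obtain M where bound: "\<forall>v>0. \<bar>f v\<bar> \<le> M * v powr -\<gamma>"
    using assms unfolding power_decay_def by blast
  moreover from bound[rule_format, of 1] have "\<bar>f 1\<bar> \<le> M"
    by simp
  then have "M \<ge> 0"
    by (rule order_trans[OF abs_ge_zero])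
  ultimately show thesis
    using assms that unfolding power_decay_def by blast
qed

lemma power_decay_abs:
  assumes "power_decay \<gamma> f"
  shows "power_decay \<gamma> (\<lambda>v. \<bar>f v\<bar>)"
proof -
  obtain M where [measurable]: "f \<in> borel_measurable borel" and cont: "continuous_on {0<..} f"
    and bound: "\<And>v. v > 0 \<Longrightarrow> \<bar>f v\<bar> \<le> M * v powr -\<gamma>"
    using assms by (rule power_decayE) blast
  show ?thesis
  proof (rule power_decayI[where M=M])
    show "(\<lambda>v. \<bar>f v\<bar>) \<in> borel_measurable borel"
      by measurable
    show "continuous_on {0<..} (\<lambda>v. \<bar>f v\<bar>)"
      using cont by (rule continuous_on_rabs)
  qed (use bound in simp)
qed

lemma power_decay_powr: "power_decay \<gamma> (\<lambda>v. v powr -\<gamma>)"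
  by (rule power_decayI[where M=1]) (auto intro!: continuous_intros)

lemma power_decay_diff_cmult:
  assumes "power_decay \<gamma> f" and "power_decay \<gamma> g"
  shows "power_decay \<gamma> (\<lambda>v. f v - c * g v)"
proof -
  obtain M where f: "f \<in> borel_measurable borel" "continuous_on {0<..} f"
    and M: "\<And>v. v > 0 \<Longrightarrow> \<bar>f v\<bar> \<le> M * v powr -\<gamma>"
    using assms(1) by (rule power_decayE) blast
  obtain N where g: "g \<in> borel_measurable borel" "continuous_on {0<..} g"
    and N: "\<And>v. v > 0 \<Longrightarrow> \<bar>g v\<bar> \<le> N * v powr -\<gamma>"
    using assms(2) by (rule power_decayE) blast
  show ?thesis
  proof (rule power_decayI[where M="M + \<bar>c\<bar> * N"])
    show "(\<lambda>v. f v - c * g v) \<in> borel_measurable borel"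
      using f g by measurable
    show "continuous_on {0<..} (\<lambda>v. f v - c * g v)"
      using f g by (intro continuous_intros)
  next
    fix v :: real
    assume "v > 0"
    have "\<bar>f v - c * g v\<bar> \<le> \<bar>f v\<bar> + \<bar>c\<bar> * \<bar>g v\<bar>"
      by (simp add: abs_mult abs_triangle_ineq4[THEN order_trans])
    also have "\<dots> \<le> M * v powr -\<gamma> + \<bar>c\<bar> * (N * v powr -\<gamma>)"
      using M N \<open>v > 0\<close> by (intro add_mono mult_left_mono) auto
    finally show "\<bar>f v - c * g v\<bar> \<le> (M + \<bar>c\<bar> * N) * v powr -\<gamma>"
      by (simp add: algebra_simps)
  qed
qed

lemma abel_transform_integrable:
  assumes "power_decay \<gamma> f" and "\<gamma> > 1/2" and "\<sigma> > 0"
  shows "integrable lborel (\<lambda>s. f (\<sigma> + s\<^sup>2))"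
proof -
  obtain M where meas[measurable]: "f \<in> borel_measurable borel" and "M \<ge> 0"
    and bound: "\<And>v. v > 0 \<Longrightarrow> \<bar>f v\<bar> \<le> M * v powr -\<gamma>"
    using assms(1) by (rule power_decayE) blast
  show ?thesis
  proof (rule Bochner_Integration.integrable_bound)
    show "integrable lborel (\<lambda>s. M * (\<sigma> + s\<^sup>2) powr -\<gamma>)"
      using integral_powr_plus_square(1)[OF assms(2,3)] by simp
    show "AE s in lborel. norm (f (\<sigma> + s\<^sup>2)) \<le> norm (M * (\<sigma> + s\<^sup>2) powr -\<gamma>)"
      using bound[of "\<sigma> + _\<^sup>2"] \<open>M \<ge> 0\<close> assms(3) by (intro AE_I2) (simp add: add_pos_nonneg)
  qed measurable
qed

lemma abel_transform_measurable [measurable]: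
  assumes [measurable]: "f \<in> borel_measurable borel"
  shows "abel_transform f \<in> borel_measurable borel"
  unfolding abel_transform_def[abs_def] by measurable

lemma continuous_on_abel_transform:
  assumes "power_decay \<gamma> f" and "\<gamma> > 1/2"
  shows "continuous_on {0<..} (abel_transform f)"
proof -
  obtain M where meas[measurable]: "f \<in> borel_measurable borel"
    and cont: "continuous_on {0<..} f" and "M \<ge> 0"
    and bound: "\<And>v. v > 0 \<Longrightarrow> \<bar>f v\<bar> \<le> M * v powr -\<gamma>"
    using assms(1) by (rule power_decayE) blast
  have cont_from: "continuous_on {c<..} (abel_transform f)" if "c > 0" for c
  proof (rule continuous_on_sequentiallyI)
    fix u :: "nat \<Rightarrow> real" and \<sigma> :: real
    assume u: "\<forall>n. u n \<in> {c<..}" and "\<sigma> \<in> {c<..}" and "u \<longlonglongrightarrow> \<sigma>"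
    show "(\<lambda>n. abel_transform f (u n)) \<longlonglongrightarrow> abel_transform f \<sigma>"
      unfolding abel_transform_def
    proof (rule integral_dominated_convergence[where w="\<lambda>s. M * (c + s\<^sup>2) powr -\<gamma>"])
      show "integrable lborel (\<lambda>s. M * (c + s\<^sup>2) powr -\<gamma>)"
        using integral_powr_plus_square(1)[OF assms(2) \<open>c > 0\<close>] by simp
      show "AE s in lborel. (\<lambda>n. f (u n + s\<^sup>2)) \<longlonglongrightarrow> f (\<sigma> + s\<^sup>2)"
      proof (rule AE_I2)
        fix s :: real
        have "isCont f (\<sigma> + s\<^sup>2)"
          using cont \<open>\<sigma> \<in> {c<..}\<close> \<open>c > 0\<close>
          by (simp add: continuous_on_eq_continuous_at add_pos_nonneg)
        then show "(\<lambda>n. f (u n + s\<^sup>2)) \<longlonglongrightarrow> f (\<sigma> + s\<^sup>2)"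
          using \<open>u \<longlonglongrightarrow> \<sigma>\<close> by (intro isCont_tendsto_compose[where g=f] tendsto_intros)
      qed
      show "AE s in lborel. norm (f (u n + s\<^sup>2)) \<le> M * (c + s\<^sup>2) powr -\<gamma>" for n
      proof (rule AE_I2)
        fix s :: real
        have "c + s\<^sup>2 > 0" "c + s\<^sup>2 \<le> u n + s\<^sup>2"
          using u \<open>c > 0\<close> by (auto simp: add_pos_nonneg less_imp_le)
        then have "M * (u n + s\<^sup>2) powr -\<gamma> \<le> M * (c + s\<^sup>2) powr -\<gamma>"
          using \<open>M \<ge> 0\<close> assms(2) by (intro mult_left_mono powr_mono2') auto
        then show "norm (f (u n + s\<^sup>2)) \<le> M * (c + s\<^sup>2) powr -\<gamma>"
          using bound[of "u n + s\<^sup>2"] \<open>c + s\<^sup>2 > 0\<close> \<open>c + s\<^sup>2 \<le> u n + s\<^sup>2\<close> by simp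
      qed
    qed measurable
  qed
  have "isCont (abel_transform f) \<sigma>" if "\<sigma> > 0" for \<sigma>
    using cont_from[of "\<sigma>/2"] that by (simp add: continuous_on_eq_continuous_at)
  then show ?thesis
    by (simp add: continuous_on_eq_continuous_at)
qed

lemma power_decay_abel_transform:
  assumes "power_decay \<gamma> f" and "\<gamma> > 1/2"
  shows "power_decay (\<gamma> - 1/2) (abel_transform f)"
proof -
  obtain M where meas: "f \<in> borel_measurable borel" and "M \<ge> 0"
    and bound: "\<And>v. v > 0 \<Longrightarrow> \<bar>f v\<bar> \<le> M * v powr -\<gamma>"
    using assms(1) by (rule power_decayE) blast
  show ?thesis
  proof (rule power_decayI[where M="M * abel_const \<gamma>"])
    show "abel_transform f \<in> borel_measurable borel"
      using meas by (rule abel_transform_measurable)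
    show "continuous_on {0<..} (abel_transform f)"
      using assms by (rule continuous_on_abel_transform)
  next
    fix \<sigma> :: real
    assume "\<sigma> > 0"
    have "\<bar>abel_transform f \<sigma>\<bar> \<le> (\<integral>s. \<bar>f (\<sigma> + s\<^sup>2)\<bar> \<partial>lborel)"
      unfolding abel_transform_def using integral_norm_bound[of lborel "\<lambda>s. f (\<sigma> + s\<^sup>2)"] by simp
    also have "\<dots> \<le> (\<integral>s. M * (\<sigma> + s\<^sup>2) powr -\<gamma> \<partial>lborel)"
      using abel_transform_integrable[OF assms \<open>\<sigma> > 0\<close>] integral_powr_plus_square(1)[OF assms(2) \<open>\<sigma> > 0\<close>]
        bound[of "\<sigma> + _\<^sup>2"] \<open>\<sigma> > 0\<close>
      by (intro Bochner_Integration.integral_mono) (auto simp: add_pos_nonneg)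
    also have "\<dots> = M * abel_const \<gamma> * \<sigma> powr -(\<gamma> - 1/2)"
      using integral_powr_plus_square(2)[OF assms(2) \<open>\<sigma> > 0\<close>] by simp
    finally show "\<bar>abel_transform f \<sigma>\<bar> \<le> M * abel_const \<gamma> * \<sigma> powr -(\<gamma> - 1/2)" .
  qed
qed

lemma power_decay_abel_transform_iterate:
  assumes "power_decay \<gamma> f" and "\<gamma> > real k / 2"
  shows "power_decay (\<gamma> - real k / 2) ((abel_transform ^^ k) f)"
  using assms(2)
proof (induction k)
  case (Suc k)
  then have "power_decay (\<gamma> - real k / 2) ((abel_transform ^^ k) f)" and "\<gamma> - real k / 2 > 1/2"
    by (simp_all add: field_simps)
  then have "power_decay (\<gamma> - real k / 2 - 1/2) (abel_transform ((abel_transform ^^ k) f))"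
    by (rule power_decay_abel_transform)
  moreover have "\<gamma> - real k / 2 - 1/2 = \<gamma> - real (Suc k) / 2"
    by (simp add: field_simps)
  ultimately show ?case
    by (simp only: funpow.simps(2) o_apply)
qed (use assms(1) in simp)

lemma abel_transform_cong:
  assumes "\<And>v. v > 0 \<Longrightarrow> f v = g v" and "\<sigma> > 0"
  shows "abel_transform f \<sigma> = abel_transform g \<sigma>"
  unfolding abel_transform_def
proof (rule Bochner_Integration.integral_cong[OF refl])
  fix s :: real
  have "\<sigma> + s\<^sup>2 > 0"
    using assms(2) by (simp add: add_pos_nonneg)
  then show "f (\<sigma> + s\<^sup>2) = g (\<sigma> + s\<^sup>2)"
    by (rule assms(1))
qed

lemma abel_transform_iterate_cong:
  assumes "\<And>v. v > 0 \<Longrightarrow> f v = g v" and "\<sigma> > 0"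
  shows "(abel_transform ^^ k) f \<sigma> = (abel_transform ^^ k) g \<sigma>"
  using assms(2)
proof (induction k arbitrary: \<sigma>)
  case (Suc k)
  show ?case
    unfolding funpow.simps(2) o_apply by (rule abel_transform_cong[OF Suc.IH Suc.prems])
qed (use assms(1) in simp)

lemma abel_transform_iterate_cmult:
  "(abel_transform ^^ k) (\<lambda>v. c * f v) = (\<lambda>\<sigma>. c * (abel_transform ^^ k) f \<sigma>)"
  by (induction k) (simp_all add: abel_transform_def[abs_def])

fun abel_const_iterate :: "real \<Rightarrow> nat \<Rightarrow> real" where
  "abel_const_iterate \<gamma> 0 = 1"
| "abel_const_iterate \<gamma> (Suc k) = abel_const \<gamma> * abel_const_iterate (\<gamma> - 1/2) k"

lemma abel_const_iterate_pos: "\<gamma> > real k / 2 \<Longrightarrow> abel_const_iterate \<gamma> k > 0"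
proof (induction k arbitrary: \<gamma>)
  case (Suc k)
  then have "abel_const \<gamma> > 0" and "abel_const_iterate (\<gamma> - 1/2) k > 0"
    by (auto intro!: abel_const_pos Suc.IH simp: field_simps)
  then show ?case
    by simp
qed simp

lemma abel_transform_iterate_powr:
  "\<gamma> > real k / 2 \<Longrightarrow> \<sigma> > 0 \<Longrightarrow>
     (abel_transform ^^ k) (\<lambda>v. v powr -\<gamma>) \<sigma> = abel_const_iterate \<gamma> k * \<sigma> powr (real k / 2 - \<gamma>)"
proof (induction k arbitrary: \<gamma> \<sigma>)
  case (Suc k)
  then have "\<gamma> > 1/2"
    by (simp add: field_simps)
  have "(abel_transform ^^ Suc k) (\<lambda>v. v powr -\<gamma>) \<sigma>
      = (abel_transform ^^ k) (abel_transform (\<lambda>v. v powr -\<gamma>)) \<sigma>"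
    by (simp add: funpow_Suc_right del: funpow.simps)
  also have "\<dots> = (abel_transform ^^ k) (\<lambda>v. abel_const \<gamma> * v powr -(\<gamma> - 1/2)) \<sigma>"
    using integral_powr_plus_square(2)[OF \<open>\<gamma> > 1/2\<close>] Suc.prems
    by (intro abel_transform_iterate_cong) (simp_all add: abel_transform_def)
  also have "\<dots> = abel_const \<gamma> * (abel_transform ^^ k) (\<lambda>v. v powr -(\<gamma> - 1/2)) \<sigma>"
    by (simp add: abel_transform_iterate_cmult)
  also have "\<dots> = abel_const \<gamma> * (abel_const_iterate (\<gamma> - 1/2) k * \<sigma> powr (real k / 2 - (\<gamma> - 1/2)))"
    using Suc.prems by (subst Suc.IH) (auto simp: field_simps)
  also have "\<dots> = abel_const_iterate \<gamma> (Suc k) * \<sigma> powr (real (Suc k) / 2 - \<gamma>)"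
    by (simp add: algebra_simps add_divide_distrib)
  finally show ?case .
qed simp

section \<open>Integrals over R^k as iterated Abel transforms\<close>

abbreviation lborel_coords :: "nat \<Rightarrow> (nat \<Rightarrow> real) measure" where
  "lborel_coords k \<equiv> PiM {..<k} (\<lambda>_. lborel)"

definition sum_sq_diff :: "nat \<Rightarrow> (nat \<Rightarrow> real) \<Rightarrow> (nat \<Rightarrow> real) \<Rightarrow> real" where
  "sum_sq_diff k c t = (\<Sum>i<k. (t i - c i)\<^sup>2)"

lemma sum_sq_diff_nonneg: "sum_sq_diff k c t \<ge> 0"
  unfolding sum_sq_diff_def by (intro sum_nonneg) auto

lemma sum_sq_diff_Suc: "sum_sq_diff (Suc k) c (t(k := y)) = sum_sq_diff k c t + (y - c k)\<^sup>2"
  unfolding sum_sq_diff_def by (simp add: sum.lessThan_Suc)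

lemma sum_sq_diff_measurable [measurable]: "sum_sq_diff k c \<in> borel_measurable (lborel_coords k)"
  unfolding sum_sq_diff_def[abs_def] by measurable

lemma lborel_coords_Suc: "lborel_coords (Suc k) = PiM (insert k {..<k}) (\<lambda>_. lborel)"
  by (simp add: lessThan_Suc)

lemma nn_integral_powr_plus_shifted_square:
  fixes \<gamma> r c :: real
  assumes "\<gamma> > 1/2" and "r > 0"
  shows "(\<integral>\<^sup>+y. ennreal ((r + (y - c)\<^sup>2) powr -\<gamma>) \<partial>lborel)
    = ennreal (abel_const \<gamma>) * ennreal (r powr -(\<gamma> - 1/2))"
proof -
  have "(\<integral>\<^sup>+y. ennreal ((r + (y - c)\<^sup>2) powr -\<gamma>) \<partial>lborel)
      = (\<integral>\<^sup>+y. ennreal ((r + (c + 1 * y - c)\<^sup>2) powr -\<gamma>) \<partial>lborel)"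
    by (subst nn_integral_real_affine[where c=1 and t=c]) auto
  also have "\<dots> = ennreal (\<integral>y. (r + y\<^sup>2) powr -\<gamma> \<partial>lborel)"
    by (auto intro!: nn_integral_eq_integral integral_powr_plus_square(1)[OF assms])
  also have "\<dots> = ennreal (abel_const \<gamma>) * ennreal (r powr -(\<gamma> - 1/2))"
    using integral_powr_plus_square(2)[OF assms] abel_const_pos[OF assms(1)] by (simp add: ennreal_mult)
  finally show ?thesis .
qed

lemma nn_integral_powr_sum_sq_diff:
  "\<gamma> > real k / 2 \<Longrightarrow> \<rho> > 0 \<Longrightarrow>
    (\<integral>\<^sup>+t. ennreal ((\<rho> + sum_sq_diff k c t) powr -\<gamma>) \<partial>lborel_coords k)
      = ennreal (abel_const_iterate \<gamma> k * \<rho> powr (real k / 2 - \<gamma>))"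
proof (induction k arbitrary: \<gamma> \<rho>)
  case 0
  then show ?case
    by (simp add: sum_sq_diff_def PiM_empty)
next
  case (Suc k)
  interpret product_sigma_finite "\<lambda>_::nat. (lborel::real measure)" ..
  have "\<gamma> > 1/2"
    using Suc.prems by (simp add: field_simps)
  have "(\<integral>\<^sup>+t. ennreal ((\<rho> + sum_sq_diff (Suc k) c t) powr -\<gamma>) \<partial>lborel_coords (Suc k))
      = (\<integral>\<^sup>+t. (\<integral>\<^sup>+y. ennreal ((\<rho> + sum_sq_diff (Suc k) c (t(k := y))) powr -\<gamma>) \<partial>lborel) \<partial>lborel_coords k)"
  proof -
    have "(\<lambda>t. ennreal ((\<rho> + sum_sq_diff (Suc k) c t) powr -\<gamma>)) \<in> borel_measurable (lborel_coords (Suc k))"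
      by measurable
    then show ?thesis
      unfolding lborel_coords_Suc by (rule product_nn_integral_insert[rotated 2]) auto
  qed
  also have "\<dots> = (\<integral>\<^sup>+t. ennreal (abel_const \<gamma>) * ennreal ((\<rho> + sum_sq_diff k c t) powr -(\<gamma> - 1/2)) \<partial>lborel_coords k)"
  proof (rule nn_integral_cong)
    fix t :: "nat \<Rightarrow> real"
    have "\<rho> + sum_sq_diff k c t > 0"
      using Suc.prems sum_sq_diff_nonneg[of k c t] by linarith
    then show "(\<integral>\<^sup>+y. ennreal ((\<rho> + sum_sq_diff (Suc k) c (t(k := y))) powr -\<gamma>) \<partial>lborel)
        = ennreal (abel_const \<gamma>) * ennreal ((\<rho> + sum_sq_diff k c t) powr -(\<gamma> - 1/2))"
      unfolding sum_sq_diff_Suc add.assoc[symmetric]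
      by (rule nn_integral_powr_plus_shifted_square[OF \<open>\<gamma> > 1/2\<close>])
  qed
  also have "\<dots> = ennreal (abel_const \<gamma>) * (\<integral>\<^sup>+t. ennreal ((\<rho> + sum_sq_diff k c t) powr -(\<gamma> - 1/2)) \<partial>lborel_coords k)"
    by (rule nn_integral_cmult) measurable
  also have "\<dots> = ennreal (abel_const \<gamma>) * ennreal (abel_const_iterate (\<gamma> - 1/2) k * \<rho> powr (real k / 2 - (\<gamma> - 1/2)))"
    using Suc.prems by (subst Suc.IH) (auto simp: field_simps)
  also have "\<dots> = ennreal (abel_const \<gamma> * (abel_const_iterate (\<gamma> - 1/2) k * \<rho> powr (real k / 2 - (\<gamma> - 1/2))))"
    using Suc.prems abel_const_pos[OF \<open>\<gamma> > 1/2\<close>] abel_const_iterate_pos[of k "\<gamma> - 1/2"]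
    by (subst ennreal_mult) (auto simp: field_simps)
  also have "\<dots> = ennreal (abel_const_iterate \<gamma> (Suc k) * \<rho> powr (real (Suc k) / 2 - \<gamma>))"
    by (simp add: algebra_simps add_divide_distrib)
  finally show ?case .
qed

lemma integrable_sum_sq_diff:
  assumes "power_decay \<gamma> f" and "\<gamma> > real k / 2" and "\<rho> > 0"
  shows "integrable (lborel_coords k) (\<lambda>t. f (\<rho> + sum_sq_diff k c t))"
proof -
  obtain M where [measurable]: "f \<in> borel_measurable borel" and "M \<ge> 0"
    and bound: "\<And>v. v > 0 \<Longrightarrow> \<bar>f v\<bar> \<le> M * v powr -\<gamma>"
    using assms(1) by (rule power_decayE) blast
  have "integrable (lborel_coords k) (\<lambda>t. (\<rho> + sum_sq_diff k c t) powr -\<gamma>)"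
    by (rule integrableI_nn_integral_finite[OF _ _ nn_integral_powr_sum_sq_diff[OF assms(2,3)]]) auto
  then have "integrable (lborel_coords k) (\<lambda>t. M * (\<rho> + sum_sq_diff k c t) powr -\<gamma>)"
    by simp
  then show ?thesis
  proof (rule Bochner_Integration.integrable_bound)
    show "AE t in lborel_coords k. norm (f (\<rho> + sum_sq_diff k c t)) \<le> norm (M * (\<rho> + sum_sq_diff k c t) powr -\<gamma>)"
      using bound \<open>M \<ge> 0\<close> assms(3) sum_sq_diff_nonneg[of k c]
      by (intro AE_I2) (simp add: add_pos_nonneg)
  qed measurable
qed

lemma integral_sum_sq_diff_eq_abel_transform_iterate:
  "power_decay \<gamma> f \<Longrightarrow> \<gamma> > real k / 2 \<Longrightarrow> \<rho> > 0 \<Longrightarrow>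
    (\<integral>t. f (\<rho> + sum_sq_diff k c t) \<partial>lborel_coords k) = (abel_transform ^^ k) f \<rho>"
proof (induction k arbitrary: \<gamma> f \<rho>)
  case 0
  then show ?case
    by (simp add: sum_sq_diff_def PiM_empty)
next
  case (Suc k)
  interpret product_sigma_finite "\<lambda>_::nat. (lborel::real measure)" ..
  have "(\<integral>t. f (\<rho> + sum_sq_diff (Suc k) c t) \<partial>lborel_coords (Suc k))
      = (\<integral>t. (\<integral>y. f (\<rho> + sum_sq_diff (Suc k) c (t(k := y))) \<partial>lborel) \<partial>lborel_coords k)"
    using integrable_sum_sq_diff[OF Suc.prems, of c] unfolding lborel_coords_Suc
    by (rule product_integral_insert[rotated 2]) auto
  also have "\<dots> = (\<integral>t. abel_transform f (\<rho> + sum_sq_diff k c t) \<partial>lborel_coords k)"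
  proof (rule Bochner_Integration.integral_cong[OF refl])
    fix t :: "nat \<Rightarrow> real"
    have "(\<integral>y. f (\<rho> + sum_sq_diff (Suc k) c (t(k := y))) \<partial>lborel)
        = \<bar>1\<bar> *\<^sub>R (\<integral>y. f (\<rho> + sum_sq_diff k c t + (c k + 1 * y - c k)\<^sup>2) \<partial>lborel)"
      unfolding sum_sq_diff_Suc add.assoc by (rule lborel_integral_real_affine) simp
    then show "(\<integral>y. f (\<rho> + sum_sq_diff (Suc k) c (t(k := y))) \<partial>lborel) = abel_transform f (\<rho> + sum_sq_diff k c t)"
      by (simp add: abel_transform_def)
  qed
  also have "\<dots> = (abel_transform ^^ k) (abel_transform f) \<rho>"
    using Suc.prems
    by (intro Suc.IH[of "\<gamma> - 1/2"] power_decay_abel_transform) (auto simp: field_simps)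
  also have "\<dots> = (abel_transform ^^ Suc k) f \<rho>"
    by (simp add: funpow_Suc_right del: funpow.simps)
  finally show ?case .
qed

section \<open>Injectivity of the Abel transform\<close>

lemma powr_neg_half: "x > 0 \<Longrightarrow> x powr - (1/2) = 1 / sqrt x"
  by (simp add: powr_minus_divide powr_half_sqrt)

lemma arcsin_scaled_has_real_derivative:
  fixes r s :: real
  assumes "r > 0" and "\<bar>s\<bar> < r"
  shows "((\<lambda>s. arcsin (s / r)) has_real_derivative (r\<^sup>2 - s\<^sup>2) powr (-1/2)) (at s)"
proof -
  have s_r: "-1 < s / r" "s / r < 1"
    using assms by (auto simp: field_simps abs_less_iff)
  have "((\<lambda>s. arcsin (s / r)) has_real_derivative inverse (sqrt (1 - (s/r)\<^sup>2)) * (1 / r)) (at s)"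
    using DERIV_arcsin[OF s_r] s_r \<open>r > 0\<close>
    by (auto intro!: derivative_eq_intros DERIV_chain2[where f=arcsin])
  moreover have "sqrt (1 - (s/r)\<^sup>2) * r = sqrt (r\<^sup>2 - s\<^sup>2)"
  proof -
    have "(1 - (s/r)\<^sup>2) * r\<^sup>2 = r\<^sup>2 - s\<^sup>2"
      using \<open>r > 0\<close> by (simp add: field_simps)
    then show ?thesis
      using \<open>r > 0\<close> by (metis abs_of_pos real_sqrt_abs real_sqrt_mult)
  qed
  moreover have "s\<^sup>2 < r\<^sup>2"
    using power_strict_mono[of "\<bar>s\<bar>" r 2] assms(2) by simp
  ultimately show ?thesis
    using \<open>r > 0\<close> by (simp add: powr_neg_half divide_simps)
qed

lemma interval_integral_inv_sqrt_diff_square: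
  fixes r :: real
  assumes "r > 0"
  shows "set_integrable lborel (einterval (- r) r) (\<lambda>s. (r\<^sup>2 - s\<^sup>2) powr (-1/2))"
    and "(LBINT s=- r..r. (r\<^sup>2 - s\<^sup>2) powr (-1/2)) = pi"
proof -
  define F where "F s = arcsin (s / r)" for s
  have F_cont: "continuous_on {-r..r} F"
    unfolding F_def using \<open>r > 0\<close> by (intro continuous_intros) (auto simp: field_simps)
  have F_left: "((F \<circ> real_of_ereal) \<longlongrightarrow> - (pi/2)) (at_right (ereal (- r)))"
    using continuous_on_Icc_at_rightD[OF F_cont] \<open>r > 0\<close>
    unfolding ereal_tendsto_simps1 by (simp add: F_def)
  have F_right: "((F \<circ> real_of_ereal) \<longlongrightarrow> pi/2) (at_left (ereal r))"
    using continuous_on_Icc_at_leftD[OF F_cont] \<open>r > 0\<close>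
    unfolding ereal_tendsto_simps1 by (simp add: F_def)
  have "(F has_real_derivative (r\<^sup>2 - s\<^sup>2) powr (-1/2)) (at s)"
    and "isCont (\<lambda>s. (r\<^sup>2 - s\<^sup>2) powr (-1/2)) s" if "- r < s" "s < r" for s
  proof -
    show "(F has_real_derivative (r\<^sup>2 - s\<^sup>2) powr (-1/2)) (at s)"
      unfolding F_def using \<open>r > 0\<close> that by (intro arcsin_scaled_has_real_derivative) auto
    have "s\<^sup>2 < r\<^sup>2"
      using power_strict_mono[of "\<bar>s\<bar>" r 2] that by simp
    then show "isCont (\<lambda>s. (r\<^sup>2 - s\<^sup>2) powr (-1/2)) s"
      by (auto intro!: continuous_intros)
  qed
  then show "set_integrable lborel (einterval (- r) r) (\<lambda>s. (r\<^sup>2 - s\<^sup>2) powr (-1/2))"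
    and "(LBINT s=- r..r. (r\<^sup>2 - s\<^sup>2) powr (-1/2)) = pi"
    using interval_integral_FTC_nonneg[where F=F and f="\<lambda>s. (r\<^sup>2 - s\<^sup>2) powr (-1/2)", OF _ _ _ _ F_left F_right]
      \<open>r > 0\<close>
    by auto
qed

definition abel_kernel :: "real \<Rightarrow> real \<Rightarrow> real" where
  "abel_kernel a \<sigma> = (if \<sigma> > a then (\<sigma> - a) powr (-1/2) else 0)"

lemma abel_kernel_measurable [measurable]: "abel_kernel a \<in> borel_measurable borel"
  unfolding abel_kernel_def[abs_def] by measurable

lemma abel_kernel_shift_square:
  fixes a v :: real
  shows "integrable lborel (\<lambda>s. abel_kernel a (v - s\<^sup>2))"
    and "(\<integral>s. abel_kernel a (v - s\<^sup>2) \<partial>lborel) = (if v > a then pi else 0)"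
proof -
  have "integrable lborel (\<lambda>s. abel_kernel a (v - s\<^sup>2)) \<and>
      (\<integral>s. abel_kernel a (v - s\<^sup>2) \<partial>lborel) = (if v > a then pi else 0)"
  proof (cases "v > a")
    case False
    have "abel_kernel a (v - s\<^sup>2) = 0" for s
    proof -
      have "\<not> a < v - s\<^sup>2"
        using False zero_le_power2[of s] by linarith
      then show ?thesis
        by (simp add: abel_kernel_def)
    qed
    then show ?thesis
      using False by simp
  next
    case True
    define r where "r = sqrt (v - a)"
    have "r > 0" and r_sq: "r\<^sup>2 = v - a"
      using True by (auto simp: r_def)
    have "v - s\<^sup>2 > a \<longleftrightarrow> s \<in> einterval (- r) r" for s
      using real_sqrt_less_iff[of "s\<^sup>2" "v - a"] by (auto simp: r_def einterval_eq abs_less_iff)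
    then have kernel: "abel_kernel a (v - s\<^sup>2) = indicator (einterval (- r) r) s *\<^sub>R (r\<^sup>2 - s\<^sup>2) powr (-1/2)" for s
      unfolding abel_kernel_def r_sq by (simp add: indicator_def algebra_simps)
    have "integrable lborel (\<lambda>s. abel_kernel a (v - s\<^sup>2))"
      using interval_integral_inv_sqrt_diff_square(1)[OF \<open>r > 0\<close>]
      unfolding kernel set_integrable_def .
    moreover have "(\<integral>s. abel_kernel a (v - s\<^sup>2) \<partial>lborel) = (LBINT s=- r..r. (r\<^sup>2 - s\<^sup>2) powr (-1/2))"
      unfolding kernel interval_lebesgue_integral_def set_lebesgue_integral_def
      using \<open>r > 0\<close> by simp
    ultimately show ?thesis
      using interval_integral_inv_sqrt_diff_square(2)[OF \<open>r > 0\<close>] True by simp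
  qed
  then show "integrable lborel (\<lambda>s. abel_kernel a (v - s\<^sup>2))"
    and "(\<integral>s. abel_kernel a (v - s\<^sup>2) \<partial>lborel) = (if v > a then pi else 0)"
    by auto
qed

lemma set_integrable_inv_sqrt_shift:
  fixes a b :: real
  assumes "a < b"
  shows "set_integrable lborel (einterval a b) (\<lambda>\<sigma>. (\<sigma> - a) powr (-1/2))"
proof -
  define F where "F \<sigma> = 2 * sqrt (\<sigma> - a)" for \<sigma>
  have F_deriv: "(F has_real_derivative (x - a) powr (-1/2)) (at x)" if "a < x" for x
    unfolding F_def using that
    by (auto intro!: derivative_eq_intros simp: powr_neg_half divide_simps)
  have F_cont: "continuous_on {a..b} F"
    unfolding F_def by (intro continuous_intros)
  have "((F \<circ> real_of_ereal) \<longlongrightarrow> F a) (at_right (ereal a))"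
    using continuous_on_Icc_at_rightD[OF F_cont assms] unfolding ereal_tendsto_simps1 .
  moreover have "((F \<circ> real_of_ereal) \<longlongrightarrow> F b) (at_left (ereal b))"
    using continuous_on_Icc_at_leftD[OF F_cont assms] unfolding ereal_tendsto_simps1 .
  ultimately show ?thesis
    using assms F_deriv
    by (intro interval_integral_FTC_nonneg(1)[where F=F]) (auto intro!: continuous_intros)
qed

lemma set_integrable_inv_sqrt_shift_diff:
  fixes a b :: real
  assumes "a < b"
  shows "set_integrable lborel (einterval b \<infinity>) (\<lambda>\<sigma>. (\<sigma> - b) powr (-1/2) - (\<sigma> - a) powr (-1/2))"
proof -
  define F where "F \<sigma> = 2 * sqrt (\<sigma> - b) - 2 * sqrt (\<sigma> - a)" for \<sigma>
  have F_deriv: "(F has_real_derivative (x - b) powr (-1/2) - (x - a) powr (-1/2)) (at x)" if "b < x" for x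
    unfolding F_def using that assms
    by (auto intro!: derivative_eq_intros simp: powr_neg_half divide_simps)
  have F_cont: "continuous_on {b..b+1} F"
    unfolding F_def by (intro continuous_intros)
  have "((F \<circ> real_of_ereal) \<longlongrightarrow> F b) (at_right (ereal b))"
    using continuous_on_Icc_at_rightD[OF F_cont] unfolding ereal_tendsto_simps1 by simp
  moreover have "((F \<circ> real_of_ereal) \<longlongrightarrow> 0) (at_left \<infinity>)"
  proof -
    have "(F \<longlongrightarrow> 0) at_top"
      unfolding F_def by real_asymp
    then show ?thesis
      unfolding ereal_tendsto_simps1 .
  qed
  moreover have "(x - a) powr (-1/2) \<le> (x - b) powr (-1/2)" if "b < x" for x
    using that assms by (intro powr_mono2') auto
  ultimately show ?thesis
    using assms F_deriv
    by (intro interval_integral_FTC_nonneg(1)[where F=F]) (auto intro!: continuous_intros)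
qed

lemma integrable_abel_kernel_diff:
  fixes a b :: real
  assumes "a < b"
  shows "integrable lborel (\<lambda>\<sigma>. abel_kernel a \<sigma> - abel_kernel b \<sigma>)"
proof (rule integrable_cong_AE_imp)
  show "integrable lborel (\<lambda>\<sigma>. indicator (einterval a b) \<sigma> *\<^sub>R (\<sigma> - a) powr (-1/2)
      - indicator (einterval b \<infinity>) \<sigma> *\<^sub>R ((\<sigma> - b) powr (-1/2) - (\<sigma> - a) powr (-1/2)))"
    using set_integrable_inv_sqrt_shift[OF assms] set_integrable_inv_sqrt_shift_diff[OF assms]
    unfolding set_integrable_def by (rule Bochner_Integration.integrable_diff)
  show "AE \<sigma> in lborel. indicator (einterval a b) \<sigma> *\<^sub>R (\<sigma> - a) powr (-1/2)
      - indicator (einterval b \<infinity>) \<sigma> *\<^sub>R ((\<sigma> - b) powr (-1/2) - (\<sigma> - a) powr (-1/2))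
      = abel_kernel a \<sigma> - abel_kernel b \<sigma>"
    using AE_lborel_singleton[of b]
    by eventually_elim (use assms in \<open>auto simp: abel_kernel_def indicator_def einterval_eq\<close>)
qed measurable

lemma integrable_abel_pairing:
  fixes \<kappa> :: "real \<Rightarrow> real"
  assumes "power_decay \<gamma> f" and "\<gamma> > 1/2" and "integrable lborel \<kappa>"
    and "a > 0" and "\<And>\<sigma>. \<sigma> \<le> a \<Longrightarrow> \<kappa> \<sigma> = 0"
  shows "integrable (lborel \<Otimes>\<^sub>M lborel) (\<lambda>(\<sigma>, s). \<kappa> \<sigma> * f (\<sigma> + s\<^sup>2))"
proof -
  have [measurable]: "f \<in> borel_measurable borel" "\<kappa> \<in> borel_measurable borel"
    using assms(1,3) by (auto elim: power_decayE)
  obtain M where "M \<ge> 0" and abs_bound: "\<And>\<sigma>. \<sigma> > 0 \<Longrightarrow> \<bar>abel_transform (\<lambda>v. \<bar>f v\<bar>) \<sigma>\<bar> \<le> M * \<sigma> powr -(\<gamma> - 1/2)"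
    using power_decay_abel_transform[OF power_decay_abs[OF assms(1)] assms(2)]
    by (rule power_decayE) blast
  define B where "B = M * a powr -(\<gamma> - 1/2)"
  have inner: "(\<integral>s. \<bar>f (\<sigma> + s\<^sup>2)\<bar> \<partial>lborel) \<le> B" if "\<sigma> > a" for \<sigma>
  proof -
    have "(\<integral>s. \<bar>f (\<sigma> + s\<^sup>2)\<bar> \<partial>lborel) \<le> M * \<sigma> powr -(\<gamma> - 1/2)"
      using abs_bound[of \<sigma>] that assms(4) by (simp add: abel_transform_def)
    also have "\<dots> \<le> B"
      unfolding B_def using \<open>M \<ge> 0\<close> assms(2,4) that by (intro mult_left_mono powr_mono2') auto
    finally show ?thesis .
  qed
  show ?thesis
  proof (rule lborel_pair.Fubini_integrable)
    show "AE \<sigma> in lborel. integrable lborel (\<lambda>s. case (\<sigma>, s) of (\<sigma>, s) \<Rightarrow> \<kappa> \<sigma> * f (\<sigma> + s\<^sup>2))"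
    proof (rule AE_I2)
      fix \<sigma> :: real
      show "integrable lborel (\<lambda>s. case (\<sigma>, s) of (\<sigma>, s) \<Rightarrow> \<kappa> \<sigma> * f (\<sigma> + s\<^sup>2))"
        using abel_transform_integrable[OF assms(1,2), of \<sigma>] assms(4) assms(5)[of \<sigma>]
        by (cases "\<sigma> > a") auto
    qed
    show "integrable lborel (\<lambda>\<sigma>. \<integral>s. norm (case (\<sigma>, s) of (\<sigma>, s) \<Rightarrow> \<kappa> \<sigma> * f (\<sigma> + s\<^sup>2)) \<partial>lborel)"
    proof (rule Bochner_Integration.integrable_bound)
      show "integrable lborel (\<lambda>\<sigma>. B * \<bar>\<kappa> \<sigma>\<bar>)"
        using assms(3) by auto
      show "AE \<sigma> in lborel. norm (\<integral>s. norm (case (\<sigma>, s) of (\<sigma>, s) \<Rightarrow> \<kappa> \<sigma> * f (\<sigma> + s\<^sup>2)) \<partial>lborel)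
          \<le> norm (B * \<bar>\<kappa> \<sigma>\<bar>)"
      proof (rule AE_I2)
        fix \<sigma> :: real
        have "(\<integral>s. norm (\<kappa> \<sigma> * f (\<sigma> + s\<^sup>2)) \<partial>lborel) = \<bar>\<kappa> \<sigma>\<bar> * (\<integral>s. \<bar>f (\<sigma> + s\<^sup>2)\<bar> \<partial>lborel)"
          by (simp add: abs_mult)
        also have "\<dots> \<le> \<bar>\<kappa> \<sigma>\<bar> * B"
          using inner[of \<sigma>] assms(5)[of \<sigma>] by (cases "\<sigma> > a") (auto intro: mult_left_mono)
        finally show "norm (\<integral>s. norm (case (\<sigma>, s) of (\<sigma>, s) \<Rightarrow> \<kappa> \<sigma> * f (\<sigma> + s\<^sup>2)) \<partial>lborel)
            \<le> norm (B * \<bar>\<kappa> \<sigma>\<bar>)"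
          using \<open>M \<ge> 0\<close> assms(4) by (simp add: B_def abs_mult mult.commute)
      qed
    qed measurable
  qed measurable
qed

lemma lborel_integral_translate:
  fixes h :: "real \<Rightarrow> real"
  shows "(\<integral>x. h x \<partial>lborel) = (\<integral>x. h (x - t) \<partial>lborel)"
    and "integrable lborel h \<longleftrightarrow> integrable lborel (\<lambda>x. h (x - t))"
  using lborel_integral_real_affine[of 1 h "- t"] lborel_integrable_real_affine_iff[of 1 h "- t"]
  by simp_all

text \<open>Fubini, the shear (\<sigma>, s) \<mapsto> (\<sigma> + s^2, s), and Fubini again.\<close>

lemma abel_transform_pairing:
  fixes \<kappa> :: "real \<Rightarrow> real"
  assumes "power_decay \<gamma> f" and "\<gamma> > 1/2" and "integrable lborel \<kappa>"
    and "a > 0" and "\<And>\<sigma>. \<sigma> \<le> a \<Longrightarrow> \<kappa> \<sigma> = 0"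
  shows "(\<integral>\<sigma>. \<kappa> \<sigma> * abel_transform f \<sigma> \<partial>lborel) = (\<integral>v. (\<integral>s. \<kappa> (v - s\<^sup>2) \<partial>lborel) * f v \<partial>lborel)"
proof -
  have [measurable]: "f \<in> borel_measurable borel" "\<kappa> \<in> borel_measurable borel"
    using assms(1,3) by (auto elim: power_decayE)
  define \<Phi> where "\<Phi> \<sigma> s = \<kappa> \<sigma> * f (\<sigma> + s\<^sup>2)" for \<sigma> s
  define \<Psi> where "\<Psi> s v = \<Phi> (v - s\<^sup>2) s" for s v
  have \<Phi>_int: "integrable (lborel \<Otimes>\<^sub>M lborel) (case_prod \<Phi>)"
    unfolding \<Phi>_def using integrable_abel_pairing[OF assms] by (simp add: case_prod_beta')
  have \<Psi>_int: "integrable (lborel \<Otimes>\<^sub>M lborel) (case_prod \<Psi>)"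
  proof (rule lborel_pair.Fubini_integrable)
    show "case_prod \<Psi> \<in> borel_measurable (lborel \<Otimes>\<^sub>M lborel)"
      unfolding \<Psi>_def \<Phi>_def by measurable
    show "AE s in lborel. integrable lborel (\<lambda>v. case_prod \<Psi> (s, v))"
      using lborel_pair.AE_integrable_snd[OF \<Phi>_int]
    proof eventually_elim
      fix s :: real
      assume "integrable lborel (\<lambda>\<sigma>. \<Phi> \<sigma> s)"
      then show "integrable lborel (\<lambda>v. case_prod \<Psi> (s, v))"
        using lborel_integral_translate(2)[of "\<lambda>\<sigma>. \<Phi> \<sigma> s" "s\<^sup>2"] by (simp add: \<Psi>_def)
    qed
    have "integrable (lborel \<Otimes>\<^sub>M lborel) (\<lambda>(\<sigma>, s). norm (\<Phi> \<sigma> s))"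
      using integrable_norm[OF \<Phi>_int] by (simp add: case_prod_beta')
    then have "integrable lborel (\<lambda>s. \<integral>\<sigma>. norm (\<Phi> \<sigma> s) \<partial>lborel)"
      by (rule lborel_pair.integrable_snd)
    moreover have "(\<integral>\<sigma>. norm (\<Phi> \<sigma> s) \<partial>lborel) = (\<integral>v. norm (case_prod \<Psi> (s, v)) \<partial>lborel)" for s
      using lborel_integral_translate(1)[of "\<lambda>\<sigma>. norm (\<Phi> \<sigma> s)" "s\<^sup>2"] by (simp add: \<Psi>_def)
    ultimately show "integrable lborel (\<lambda>s. \<integral>v. norm (case_prod \<Psi> (s, v)) \<partial>lborel)"
      by simp
  qed
  have "(\<integral>\<sigma>. \<kappa> \<sigma> * abel_transform f \<sigma> \<partial>lborel) = (\<integral>\<sigma>. (\<integral>s. \<Phi> \<sigma> s \<partial>lborel) \<partial>lborel)"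
    by (simp add: \<Phi>_def abel_transform_def)
  also have "\<dots> = (\<integral>s. (\<integral>\<sigma>. \<Phi> \<sigma> s \<partial>lborel) \<partial>lborel)"
    by (rule lborel_pair.Fubini_integral[OF \<Phi>_int, symmetric])
  also have "\<dots> = (\<integral>s. (\<integral>v. \<Psi> s v \<partial>lborel) \<partial>lborel)"
  proof -
    have "(\<integral>\<sigma>. \<Phi> \<sigma> s \<partial>lborel) = (\<integral>v. \<Psi> s v \<partial>lborel)" for s
      using lborel_integral_translate(1)[of "\<lambda>\<sigma>. \<Phi> \<sigma> s" "s\<^sup>2"] by (simp add: \<Psi>_def)
    then show ?thesis
      by simp
  qed
  also have "\<dots> = (\<integral>v. (\<integral>s. \<Psi> s v \<partial>lborel) \<partial>lborel)"
    by (rule lborel_pair.Fubini_integral[OF \<Psi>_int, symmetric])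
  also have "\<dots> = (\<integral>v. (\<integral>s. \<kappa> (v - s\<^sup>2) \<partial>lborel) * f v \<partial>lborel)"
    by (simp add: \<Psi>_def \<Phi>_def)
  finally show ?thesis .
qed

lemma interval_integral_eq_zero_if_abel_transform_eq_zero:
  assumes "power_decay \<gamma> f" and "\<gamma> > 1/2" and "\<And>\<sigma>. \<sigma> > 0 \<Longrightarrow> abel_transform f \<sigma> = 0"
    and "0 < a" and "a < b"
  shows "(\<integral>v. indicator {a<..b} v * f v \<partial>lborel) = 0"
proof -
  define \<kappa> where "\<kappa> \<sigma> = abel_kernel a \<sigma> - abel_kernel b \<sigma>" for \<sigma>
  have \<kappa>_int: "integrable lborel \<kappa>"
    unfolding \<kappa>_def[abs_def] using \<open>a < b\<close> by (rule integrable_abel_kernel_diff)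
  have \<kappa>_zero: "\<kappa> \<sigma> = 0" if "\<sigma> \<le> a" for \<sigma>
    using that \<open>a < b\<close> by (simp add: \<kappa>_def abel_kernel_def)
  have "(\<integral>s. \<kappa> (v - s\<^sup>2) \<partial>lborel) = pi * indicator {a<..b} v" for v
  proof -
    have "(\<integral>s. \<kappa> (v - s\<^sup>2) \<partial>lborel)
        = (\<integral>s. abel_kernel a (v - s\<^sup>2) \<partial>lborel) - (\<integral>s. abel_kernel b (v - s\<^sup>2) \<partial>lborel)"
      unfolding \<kappa>_def by (intro Bochner_Integration.integral_diff abel_kernel_shift_square(1))
    then show ?thesis
      using \<open>a < b\<close> by (auto simp: abel_kernel_shift_square(2) indicator_def)
  qed
  then have "pi * (\<integral>v. indicator {a<..b} v * f v \<partial>lborel) = (\<integral>v. (\<integral>s. \<kappa> (v - s\<^sup>2) \<partial>lborel) * f v \<partial>lborel)"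
    by (simp add: mult.assoc)
  also have "\<dots> = (\<integral>\<sigma>. \<kappa> \<sigma> * abel_transform f \<sigma> \<partial>lborel)"
    by (rule abel_transform_pairing[OF assms(1,2) \<kappa>_int \<open>0 < a\<close> \<kappa>_zero, symmetric])
  also have "\<dots> = 0"
  proof -
    have "(\<lambda>\<sigma>. \<kappa> \<sigma> * abel_transform f \<sigma>) = (\<lambda>\<sigma>. 0)"
    proof
      show "\<kappa> \<sigma> * abel_transform f \<sigma> = 0" for \<sigma>
        using \<kappa>_zero[of \<sigma>] assms(3)[of \<sigma>] \<open>0 < a\<close> by (cases "\<sigma> \<le> a") auto
    qed
    then show ?thesis
      by simp
  qed
  finally show ?thesis
    by simp
qed

lemma eq_zero_if_interval_integrals_eq_zero:
  fixes f :: "real \<Rightarrow> real"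
  assumes [measurable]: "f \<in> borel_measurable borel" and "continuous_on {0<..} f"
    and zero: "\<And>a b. 0 < a \<Longrightarrow> a < b \<Longrightarrow> (\<integral>v. indicator {a<..b} v * f v \<partial>lborel) = 0"
    and "v0 > 0"
  shows "f v0 = 0"
proof (rule ccontr)
  assume "f v0 \<noteq> 0"
  define e where "e = \<bar>f v0\<bar> / 2"
  define s where "s = sgn (f v0)"
  have "e > 0" and s: "\<bar>s\<bar> = 1" "s * f v0 = \<bar>f v0\<bar>"
    using \<open>f v0 \<noteq> 0\<close> by (auto simp: e_def s_def sgn_if)
  have "isCont f v0"
    using assms(2) \<open>v0 > 0\<close> by (simp add: continuous_on_eq_continuous_at)
  then obtain \<delta> where "\<delta> > 0" and near: "\<And>v. \<bar>v - v0\<bar> < \<delta> \<Longrightarrow> \<bar>f v - f v0\<bar> < e"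
    using \<open>e > 0\<close> unfolding continuous_at_eps_delta dist_real_def by blast
  define a where "a = v0 - min \<delta> v0 / 2"
  define b where "b = v0 + min \<delta> v0 / 2"
  have "0 < a" "a < b" and ab_near: "\<And>v. v \<in> {a<..b} \<Longrightarrow> \<bar>v - v0\<bar> < \<delta>"
    using \<open>\<delta> > 0\<close> \<open>v0 > 0\<close> by (auto simp: a_def b_def abs_if)
  have lower: "e \<le> s * f v" and upper: "\<bar>s * f v\<bar> \<le> \<bar>f v0\<bar> + e" if "v \<in> {a<..b}" for v
  proof -
    have "\<bar>s * f v - s * f v0\<bar> < e"
      using near[OF ab_near[OF that]] s(1) by (simp add: abs_mult flip: right_diff_distrib)
    then show "e \<le> s * f v" and "\<bar>s * f v\<bar> \<le> \<bar>f v0\<bar> + e"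
      unfolding s(2) e_def by arith+
  qed
  have "(b - a) * e = (\<integral>v. indicator {a<..b} v * e \<partial>lborel)"
    using \<open>a < b\<close> by simp
  also have "\<dots> \<le> (\<integral>v. indicator {a<..b} v * (s * f v) \<partial>lborel)"
  proof (rule Bochner_Integration.integral_mono)
    show "integrable lborel (\<lambda>v. indicator {a<..b} v * (s * f v))"
    proof (rule Bochner_Integration.integrable_bound)
      show "integrable lborel (\<lambda>v. indicator {a<..b} v * (\<bar>f v0\<bar> + e))"
        using \<open>a < b\<close> by (intro integrable_mult_left integrable_real_indicator) auto
      show "AE v in lborel. norm (indicator {a<..b} v * (s * f v)) \<le> norm (indicator {a<..b} v * (\<bar>f v0\<bar> + e))"
        using upper \<open>e > 0\<close> by (intro AE_I2) (auto simp: indicator_def)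
    qed measurable
    show "integrable lborel (\<lambda>v. indicator {a<..b} v * e)"
      using \<open>a < b\<close> by (intro integrable_mult_left integrable_real_indicator) auto
    show "indicator {a<..b} v * e \<le> indicator {a<..b} v * (s * f v)" for v
      using lower[of v] by (auto simp: indicator_def)
  qed
  also have "\<dots> = s * (\<integral>v. indicator {a<..b} v * f v \<partial>lborel)"
    by (simp add: mult.left_commute)
  also have "\<dots> = 0"
    using zero[OF \<open>0 < a\<close> \<open>a < b\<close>] by simp
  finally show False
    using \<open>a < b\<close> \<open>e > 0\<close> by (simp add: mult_le_0_iff)
qed

lemma abel_transform_injective:
  assumes "power_decay \<gamma> f" and "\<gamma> > 1/2" and "\<And>\<sigma>. \<sigma> > 0 \<Longrightarrow> abel_transform f \<sigma> = 0"
    and "v > 0"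
  shows "f v = 0"
proof -
  have "f \<in> borel_measurable borel" and "continuous_on {0<..} f"
    using assms(1) by (auto elim: power_decayE)
  then show ?thesis
    using interval_integral_eq_zero_if_abel_transform_eq_zero[OF assms(1-3)] \<open>v > 0\<close>
    by (rule eq_zero_if_interval_integrals_eq_zero)
qed

lemma abel_transform_iterate_injective:
  "power_decay \<gamma> f \<Longrightarrow> \<gamma> > real k / 2 \<Longrightarrow> (\<And>\<sigma>. \<sigma> > 0 \<Longrightarrow> (abel_transform ^^ k) f \<sigma> = 0) \<Longrightarrow>
    v > 0 \<Longrightarrow> f v = 0"
proof (induction k arbitrary: \<gamma> f v)
  case (Suc k)
  then have "\<gamma> > 1/2" and "\<gamma> - 1/2 > real k / 2"
    by (simp_all add: field_simps)
  have transform_zero: "abel_transform f \<sigma> = 0" if "\<sigma> > 0" for \<sigma>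
  proof (rule Suc.IH[of "\<gamma> - 1/2" "abel_transform f" \<sigma>])
    show "power_decay (\<gamma> - 1/2) (abel_transform f)"
      using Suc.prems(1) \<open>\<gamma> > 1/2\<close> by (rule power_decay_abel_transform)
    show "(abel_transform ^^ k) (abel_transform f) \<rho> = 0" if "\<rho> > 0" for \<rho>
      using Suc.prems(3)[OF that] by (simp add: funpow_Suc_right del: funpow.simps)
  qed fact+
  show ?case
    by (rule abel_transform_injective[OF Suc.prems(1) \<open>\<gamma> > 1/2\<close> transform_zero Suc.prems(4)])
qed simp

lemma continuous_nonzero_constant_sign:
  fixes F :: "real \<Rightarrow> real"
  assumes "continuous_on {0<..} F" and "\<And>\<rho>. \<rho> > 0 \<Longrightarrow> F \<rho> \<noteq> 0"
  shows "(\<forall>\<rho>>0. F \<rho> > 0) \<or> (\<forall>\<rho>>0. F \<rho> < 0)"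
proof (rule ccontr)
  assume "\<not> ?thesis"
  then obtain \<rho>1 \<rho>2 where "\<rho>1 > 0" "\<rho>2 > 0" "F \<rho>1 < 0" "F \<rho>2 > 0"
    using assms(2) by (metis linorder_neqE_linordered_idom)
  have "connected (F ` {0<..})"
    using assms(1) by (rule connected_continuous_image) simp
  moreover have "F \<rho>1 \<in> F ` {0<..}" "F \<rho>2 \<in> F ` {0<..}"
    using \<open>\<rho>1 > 0\<close> \<open>\<rho>2 > 0\<close> by simp_all
  ultimately have "0 \<in> F ` {0<..}"
    using connectedD_interval[of "F ` {0<..}" "F \<rho>1" "F \<rho>2" 0] \<open>F \<rho>1 < 0\<close> \<open>F \<rho>2 > 0\<close> by simp
  then show False
    using assms(2) by auto
qed

lemma powr_law_if_abs_powr_law: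
  fixes F :: "real \<Rightarrow> real"
  assumes "continuous_on {0<..} F" and "\<alpha> > 0"
    and law: "\<And>\<rho>. \<rho> > 0 \<Longrightarrow> \<bar>F \<rho>\<bar> powr (-1/\<alpha>) = c * sqrt \<rho>"
  shows "\<exists>\<mu>. \<forall>\<rho>>0. F \<rho> = \<mu> * \<rho> powr -(\<alpha>/2)"
proof (cases "c > 0")
  case False
  have "F \<rho> = 0" if "\<rho> > 0" for \<rho>
  proof -
    have "c * sqrt \<rho> \<le> 0"
      using False \<open>\<rho> > 0\<close> by (intro mult_nonpos_nonneg) auto
    then have "\<bar>F \<rho>\<bar> powr (-1/\<alpha>) = 0"
      using law[OF that] powr_ge_zero[of "\<bar>F \<rho>\<bar>" "-1/\<alpha>"] by linarith
    then show ?thesis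
      by simp
  qed
  then show ?thesis
    by auto
next
  case True
  have abs_F: "\<bar>F \<rho>\<bar> = c powr -\<alpha> * \<rho> powr -(\<alpha>/2)" if "\<rho> > 0" for \<rho>
  proof -
    have "\<bar>F \<rho>\<bar> \<noteq> 0"
      using law[OF that] True that by auto
    then have "\<bar>F \<rho>\<bar> = (\<bar>F \<rho>\<bar> powr (-1/\<alpha>)) powr -\<alpha>"
      using \<open>\<alpha> > 0\<close> by (simp add: powr_powr)
    also have "\<dots> = (c * sqrt \<rho>) powr -\<alpha>"
      using law[OF that] by simp
    also have "\<dots> = c powr -\<alpha> * \<rho> powr -(\<alpha>/2)"
      using True that by (simp add: powr_mult powr_half_sqrt[symmetric] powr_powr)
    finally show ?thesis .
  qed
  have "F \<rho> \<noteq> 0" if "\<rho> > 0" for \<rho>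
    using abs_F[OF that] True that by auto
  with assms(1) consider "\<forall>\<rho>>0. F \<rho> > 0" | "\<forall>\<rho>>0. F \<rho> < 0"
    using continuous_nonzero_constant_sign by blast
  then show ?thesis
  proof cases
    case 1
    have "F \<rho> = c powr -\<alpha> * \<rho> powr -(\<alpha>/2)" if "\<rho> > 0" for \<rho>
      using abs_F[OF that] 1 that by auto
    then show ?thesis
      by blast
  next
    case 2
    have "F \<rho> = - (c powr -\<alpha>) * \<rho> powr -(\<alpha>/2)" if "\<rho> > 0" for \<rho>
      using abs_F[OF that] 2 that by auto
    then show ?thesis
      by blast
  qed
qed

text \<open>Linearity of the iterated transform is read off its integral representation over R^k.\<close>

lemma eq_powr_if_abel_transform_iterate_eq_powr:
  assumes "power_decay \<gamma> H" and "\<gamma> > real k / 2"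
    and law: "\<And>\<rho>. \<rho> > 0 \<Longrightarrow> (abel_transform ^^ k) H \<rho> = \<mu> * \<rho> powr (real k / 2 - \<gamma>)"
  shows "\<exists>l. \<forall>q>0. H q = l * q powr -\<gamma>"
proof -
  define l where "l = \<mu> / abel_const_iterate \<gamma> k"
  define \<psi> where "\<psi> q = H q - l * q powr -\<gamma>" for q
  have \<psi>_decay: "power_decay \<gamma> \<psi>"
    unfolding \<psi>_def[abs_def] using assms(1) power_decay_powr by (rule power_decay_diff_cmult)
  have "(abel_transform ^^ k) \<psi> \<rho> = 0" if "\<rho> > 0" for \<rho>
  proof -
    let ?I = "\<lambda>g. \<integral>t. g (\<rho> + sum_sq_diff k (\<lambda>_. 0) t) \<partial>lborel_coords k"
    have "(abel_transform ^^ k) \<psi> \<rho> = ?I \<psi>"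
      using integral_sum_sq_diff_eq_abel_transform_iterate[OF \<psi>_decay assms(2) that] ..
    also have "\<dots> = ?I H - l * ?I (\<lambda>q. q powr -\<gamma>)"
      unfolding \<psi>_def
      using integrable_sum_sq_diff[OF assms(1,2) that] integrable_sum_sq_diff[OF power_decay_powr assms(2) that]
      by simp
    also have "\<dots> = (abel_transform ^^ k) H \<rho> - l * (abel_transform ^^ k) (\<lambda>q. q powr -\<gamma>) \<rho>"
      using integral_sum_sq_diff_eq_abel_transform_iterate[OF assms(1,2) that]
        integral_sum_sq_diff_eq_abel_transform_iterate[OF power_decay_powr assms(2) that]
      by simp
    also have "\<dots> = 0"
      using law[OF that] abel_transform_iterate_powr[OF assms(2) that] abel_const_iterate_pos[OF assms(2)]
      by (simp add: l_def)
    finally show ?thesis .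
  qed
  then have "\<psi> q = 0" if "q > 0" for q
    using abel_transform_iterate_injective[OF \<psi>_decay assms(2)] that by blast
  then show ?thesis
    by (auto simp: \<psi>_def)
qed

section \<open>Radial kernels on d-planes\<close>

text \<open>The integrand K z * norm z powr -\<beta> of a radial kernel as a function of q = (norm z)^2;
  it is set to 0 off (0, \<infinity>) so that it is Borel measurable on the whole line.\<close>

definition radial_weight :: "(real \<Rightarrow> real) \<Rightarrow> real \<Rightarrow> real \<Rightarrow> real" where
  "radial_weight Kt \<beta> q = (if q > 0 then Kt (sqrt q) * q powr -(\<beta>/2) else 0)"

lemma power_decay_radial_weight:
  assumes cont: "continuous_on {0<..} Kt" and bound: "\<And>r. r > 0 \<Longrightarrow> \<bar>Kt r\<bar> \<le> B"
  shows "power_decay (\<beta>/2) (radial_weight Kt \<beta>)"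
proof (rule power_decayI[where M=B])
  have weight_cont: "continuous_on {0<..} (\<lambda>q. Kt (sqrt q) * q powr -(\<beta>/2))"
    by (intro continuous_intros continuous_on_compose2[OF cont]) auto
  have "radial_weight Kt \<beta> = (\<lambda>q. if q \<in> {0<..} then Kt (sqrt q) * q powr -(\<beta>/2) else 0)"
    by (auto simp: radial_weight_def fun_eq_iff)
  then show "radial_weight Kt \<beta> \<in> borel_measurable borel"
    using borel_measurable_continuous_on_if[OF _ weight_cont] by simp
  show "continuous_on {0<..} (radial_weight Kt \<beta>)"
    using weight_cont by (rule continuous_on_cong[THEN iffD1, rotated 2]) (auto simp: radial_weight_def)
  show "\<bar>radial_weight Kt \<beta> q\<bar> \<le> B * q powr -(\<beta>/2)" if "q > 0" for q
    using bound[of "sqrt q"] that by (simp add: radial_weight_def abs_mult mult_right_mono)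
qed

lemma norm_sum_orthonormal:
  fixes v :: "nat \<Rightarrow> 'a::real_inner"
  assumes "\<And>i j. i < d \<Longrightarrow> j < d \<Longrightarrow> v i \<bullet> v j = (if i = j then 1 else 0)"
  shows "(norm (\<Sum>i<d. s i *\<^sub>R v i))\<^sup>2 = (\<Sum>i<d. (s i)\<^sup>2)"
proof -
  have "(norm (\<Sum>i<d. s i *\<^sub>R v i))\<^sup>2 = (\<Sum>i<d. (s i *\<^sub>R v i) \<bullet> (\<Sum>j<d. s j *\<^sub>R v j))"
    by (simp add: power2_norm_eq_inner inner_sum_left)
  also have "\<dots> = (\<Sum>i<d. \<Sum>j<d. s i * s j * (v i \<bullet> v j))"
    by (simp add: inner_sum_right mult.assoc mult.left_commute)
  also have "\<dots> = (\<Sum>i<d. \<Sum>j<d. if j = i then s i * s i else 0)"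
    using assms by (intro sum.cong refl) auto
  also have "\<dots> = (\<Sum>i<d. (s i)\<^sup>2)"
    by (simp add: power2_eq_square)
  finally show ?thesis .
qed

lemma orthonormal_family_exists:
  assumes "d < DIM('a)"
  obtains e :: "nat \<Rightarrow> 'a::euclidean_space" where "\<And>i j. i \<le> d \<Longrightarrow> j \<le> d \<Longrightarrow> e i \<bullet> e j = (if i = j then 1 else 0)"
proof -
  obtain h where h: "bij_betw h {0..<DIM('a)} (Basis :: 'a set)"
    using ex_bij_betw_nat_finite[OF finite_Basis] by blast
  have "h i \<in> Basis" if "i \<le> d" for i
    using bij_betw_apply[OF h] that assms by simp
  moreover have "h i = h j \<longleftrightarrow> i = j" if "i \<le> d" "j \<le> d" for i j
    using inj_on_eq_iff[OF bij_betw_imp_inj_on[OF h]] that assms by simp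
  ultimately have "h i \<bullet> h j = (if i = j then 1 else 0)" if "i \<le> d" "j \<le> d" for i j
    using that by (simp add: inner_Basis)
  then show ?thesis
    using that by blast
qed

lemma subspace_frame_range: "subspace (range (\<lambda>t. \<Sum>i<d. t i *\<^sub>R e i))"
  unfolding subspace_def
proof (intro conjI ballI allI)
  show "0 \<in> range (\<lambda>t. \<Sum>i<d. t i *\<^sub>R e i)"
    by (rule range_eqI[of _ _ "\<lambda>_. 0"]) simp
  fix x y
  assume "x \<in> range (\<lambda>t. \<Sum>i<d. t i *\<^sub>R e i)" and "y \<in> range (\<lambda>t. \<Sum>i<d. t i *\<^sub>R e i)"
  then obtain s t where "x = (\<Sum>i<d. s i *\<^sub>R e i)" and "y = (\<Sum>i<d. t i *\<^sub>R e i)"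
    by blast
  then show "x + y \<in> range (\<lambda>t. \<Sum>i<d. t i *\<^sub>R e i)"
    by (intro range_eqI[of _ _ "\<lambda>i. s i + t i"]) (simp add: sum.distrib scaleR_add_left)
next
  fix c x
  assume "x \<in> range (\<lambda>t. \<Sum>i<d. t i *\<^sub>R e i)"
  then obtain s where "x = (\<Sum>i<d. s i *\<^sub>R e i)"
    by blast
  then show "c *\<^sub>R x \<in> range (\<lambda>t. \<Sum>i<d. t i *\<^sub>R e i)"
    by (intro range_eqI[of _ _ "\<lambda>i. c * s i"]) (simp add: scaleR_sum_right)
qed

lemma d_plane_frame_range:
  assumes orth: "\<And>i j. i < d \<Longrightarrow> j < d \<Longrightarrow> e i \<bullet> e j = (if i = j then 1 else 0)"
  shows "d_plane d (range (\<lambda>t. \<Sum>i<d. t i *\<^sub>R e i))"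
proof -
  let ?E = "range (\<lambda>t. \<Sum>i<d. t i *\<^sub>R e i)"
  have "e j \<in> ?E" if "j < d" for j
  proof (rule range_eqI)
    show "e j = (\<Sum>i<d. (if i = j then 1 else 0) *\<^sub>R e i)"
      using that by (simp add: if_distrib[of "\<lambda>c. c *\<^sub>R _"] sum.delta cong: if_cong)
  qed
  moreover have "?E \<subseteq> span (e ` {..<d})"
  proof
    fix y
    assume "y \<in> ?E"
    then obtain t where y: "y = (\<Sum>i<d. t i *\<^sub>R e i)"
      by blast
    show "y \<in> span (e ` {..<d})"
      unfolding y by (rule span_sum, rule span_scale, rule span_base) simp
  qed
  moreover have "independent (e ` {..<d})"
  proof (rule pairwise_orthogonal_independent)
    show "pairwise orthogonal (e ` {..<d})"
      using orth by (auto simp: pairwise_def orthogonal_def)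
    show "0 \<notin> e ` {..<d}"
      using orth by (metis imageE inner_zero_left lessThan_iff zero_neq_one)
  qed
  moreover have "inj_on e {..<d}"
    using orth by (metis inj_onI lessThan_iff zero_neq_one)
  ultimately have "dim ?E = d"
    by (intro dim_unique[of "e ` {..<d}"]) (auto simp: card_image)
  then show ?thesis
    unfolding d_plane_def using subspace_frame_range[of e d]
    by (simp add: subspace_imp_affine aff_dim_subspace)
qed

lemma norm_diff_sq_orthogonal:
  fixes x y :: "'a::real_inner"
  assumes "x \<bullet> y = 0"
  shows "(norm (x - y))\<^sup>2 = (norm x)\<^sup>2 + (norm y)\<^sup>2"
  using assms by (simp add: power2_norm_eq_inner inner_diff inner_commute)

lemma infdist_orthogonal_subspace:
  fixes x :: "'a::real_inner"
  assumes "subspace E" and orth: "\<And>y. y \<in> E \<Longrightarrow> x \<bullet> y = 0"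
  shows "infdist x E = norm x"
proof (rule antisym)
  have "0 \<in> E"
    using assms(1) by (rule subspace_0)
  then show "infdist x E \<le> norm x"
    using infdist_le[of 0 E x] by simp
  show "norm x \<le> infdist x E"
    unfolding infdist_notempty[OF ex_in_conv[THEN iffD1, OF exI, OF \<open>0 \<in> E\<close>]]
  proof (rule cINF_greatest)
    fix y
    assume "y \<in> E"
    then have "(norm x)\<^sup>2 \<le> (dist x y)\<^sup>2"
      using norm_diff_sq_orthogonal[OF orth] by (simp add: dist_norm)
    then show "norm x \<le> dist x y"
      by (simp add: power2_le_iff_abs_le)
  qed (use \<open>0 \<in> E\<close> in blast)
qed

lemma plane_hausdorff_integral_eqI:
  assumes "plane_frame d E a0 v0"
    and "\<And>a v. plane_frame d E a v \<Longrightarrow> (\<integral>t. f (a + (\<Sum>i<d. t i *\<^sub>R v i)) \<partial>lborel_coords d) = I"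
  shows "plane_hausdorff_integral d E f = I"
  unfolding plane_hausdorff_integral_def
  by (rule someI2_ex) (use assms in blast)+

lemma frame_integral_radial:
  fixes K :: "'a::euclidean_space \<Rightarrow> real"
  assumes frame: "plane_frame d E a v" and "0 \<in> E" and orth: "\<And>y. y \<in> E \<Longrightarrow> x \<bullet> y = 0"
    and "x \<noteq> 0" and radial: "\<And>z. K z = Kt (norm z)"
    and decay: "power_decay (\<beta>/2) (radial_weight Kt \<beta>)" and "\<beta> > real d"
  shows "(\<integral>t. K (x - (a + (\<Sum>i<d. t i *\<^sub>R v i))) * norm (x - (a + (\<Sum>i<d. t i *\<^sub>R v i))) powr -\<beta>
            \<partial>lborel_coords d)
      = (abel_transform ^^ d) (radial_weight Kt \<beta>) ((norm x)\<^sup>2)"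
proof -
  have orthonormal: "\<And>i j. i < d \<Longrightarrow> j < d \<Longrightarrow> v i \<bullet> v j = (if i = j then 1 else 0)"
    and E_eq: "E = range (\<lambda>t. a + (\<Sum>i<d. t i *\<^sub>R v i))"
    using frame unfolding plane_frame_def by auto
  obtain c where c: "0 = a + (\<Sum>i<d. c i *\<^sub>R v i)"
    using \<open>0 \<in> E\<close> unfolding E_eq by blast
  have integrand: "K (x - y) * norm (x - y) powr -\<beta> = radial_weight Kt \<beta> ((norm x)\<^sup>2 + sum_sq_diff d c t)"
    if y: "y = a + (\<Sum>i<d. t i *\<^sub>R v i)" for y t
  proof -
    have "y = (a + (\<Sum>i<d. t i *\<^sub>R v i)) - (a + (\<Sum>i<d. c i *\<^sub>R v i))"
      using y c by simp
    also have "\<dots> = (\<Sum>i<d. (t i - c i) *\<^sub>R v i)"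
      by (simp add: scaleR_diff_left sum_subtractf)
    finally have "y = (\<Sum>i<d. (t i - c i) *\<^sub>R v i)" .
    then have "(norm y)\<^sup>2 = sum_sq_diff d c t"
      unfolding sum_sq_diff_def using norm_sum_orthonormal[OF orthonormal] by simp
    moreover have "y \<in> E"
      unfolding E_eq y by blast
    ultimately have q: "(norm (x - y))\<^sup>2 = (norm x)\<^sup>2 + sum_sq_diff d c t"
      using norm_diff_sq_orthogonal[OF orth] by simp
    have "norm (x - y) > 0"
      using orth[OF \<open>y \<in> E\<close>] \<open>x \<noteq> 0\<close> by (auto simp: inner_eq_zero_iff)
    moreover have "((norm (x - y))\<^sup>2) powr -(\<beta>/2) = norm (x - y) powr -\<beta>"
      using \<open>norm (x - y) > 0\<close> by (simp add: powr_powr flip: powr_numeral)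
    ultimately show ?thesis
      unfolding radial_weight_def q[symmetric] radial by simp
  qed
  have "(\<integral>t. K (x - (a + (\<Sum>i<d. t i *\<^sub>R v i))) * norm (x - (a + (\<Sum>i<d. t i *\<^sub>R v i))) powr -\<beta>
            \<partial>lborel_coords d)
      = (\<integral>t. radial_weight Kt \<beta> ((norm x)\<^sup>2 + sum_sq_diff d c t) \<partial>lborel_coords d)"
    by (simp add: integrand)
  also have "\<dots> = (abel_transform ^^ d) (radial_weight Kt \<beta>) ((norm x)\<^sup>2)"
    using decay \<open>\<beta> > real d\<close> \<open>x \<noteq> 0\<close>
    by (intro integral_sum_sq_diff_eq_abel_transform_iterate) auto
  finally show ?thesis .
qed

lemma distance_exact_radial_abel_law:
  fixes K :: "'a::euclidean_space \<Rightarrow> real"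
  assumes "d < DIM('a)" and "\<alpha> > 0" and "distance_exact K d \<alpha>" and radial: "\<And>z. K z = Kt (norm z)"
    and decay: "power_decay ((real d + \<alpha>)/2) (radial_weight Kt (real d + \<alpha>))"
  shows "\<exists>c. \<forall>\<rho>>0. \<bar>(abel_transform ^^ d) (radial_weight Kt (real d + \<alpha>)) \<rho>\<bar> powr (-1/\<alpha>) = c * sqrt \<rho>"
proof -
  obtain e :: "nat \<Rightarrow> 'a" where orthonormal: "\<And>i j. i \<le> d \<Longrightarrow> j \<le> d \<Longrightarrow> e i \<bullet> e j = (if i = j then 1 else 0)"
    using orthonormal_family_exists[OF assms(1)] by blast
  define E where "E = range (\<lambda>t. \<Sum>i<d. t i *\<^sub>R e i)"
  have "plane_frame d E 0 e"
    unfolding plane_frame_def E_def using orthonormal by simp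
  have "subspace E"
    unfolding E_def by (rule subspace_frame_range)
  have "d_plane d E"
    unfolding E_def using orthonormal by (intro d_plane_frame_range) auto
  then obtain c where c: "\<And>x. x \<notin> E \<Longrightarrow> D_plane K d \<alpha> E x = c * infdist x E"
    using \<open>distance_exact K d \<alpha>\<close> unfolding distance_exact_def by blast
  have "\<bar>(abel_transform ^^ d) (radial_weight Kt (real d + \<alpha>)) \<rho>\<bar> powr (-1/\<alpha>) = c * sqrt \<rho>" if "\<rho> > 0" for \<rho>
  proof -
    define x where "x = sqrt \<rho> *\<^sub>R e d"
    have orth: "x \<bullet> y = 0" if "y \<in> E" for y
      using that orthonormal by (auto simp: E_def x_def inner_sum_right)
    have "norm x = sqrt \<rho>"
      using orthonormal[of d d] \<open>\<rho> > 0\<close> by (simp add: x_def norm_eq_sqrt_inner)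
    then have "x \<noteq> 0" and "x \<notin> E"
      using orth[of x] \<open>\<rho> > 0\<close> by auto
    have "plane_hausdorff_integral d E (\<lambda>y. K (x - y) * norm (x - y) powr -(real d + \<alpha>))
        = (abel_transform ^^ d) (radial_weight Kt (real d + \<alpha>)) \<rho>"
      using frame_integral_radial[OF _ subspace_0[OF \<open>subspace E\<close>] orth \<open>x \<noteq> 0\<close> radial decay]
        \<open>norm x = sqrt \<rho>\<close> \<open>\<rho> > 0\<close> \<open>\<alpha> > 0\<close>
      by (intro plane_hausdorff_integral_eqI[OF \<open>plane_frame d E 0 e\<close>]) simp
    then have "D_plane K d \<alpha> E x = \<bar>(abel_transform ^^ d) (radial_weight Kt (real d + \<alpha>)) \<rho>\<bar> powr (-1/\<alpha>)"
      \<comment> \<open>x powr a = (-x) powr a for real x, so only the absolute value matters\<close>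
      unfolding D_plane_def by (simp add: abs_if uminus_powr_eq)
    moreover have "infdist x E = sqrt \<rho>"
      using infdist_orthogonal_subspace[OF \<open>subspace E\<close> orth] \<open>norm x = sqrt \<rho>\<close> by simp
    ultimately show ?thesis
      using c[OF \<open>x \<notin> E\<close>] by simp
  qed
  then show ?thesis
    by blast
qed

lemma radial_profile_constant_if_distance_exact:
  fixes K :: "'a::euclidean_space \<Rightarrow> real" and Kt :: "real \<Rightarrow> real"
  assumes "d < DIM('a)" and "\<alpha> > 0" and "distance_exact K d \<alpha>" and radial: "\<And>z. K z = Kt (norm z)"
    and "continuous_on {0<..} Kt" and "\<And>r. r > 0 \<Longrightarrow> \<bar>Kt r\<bar> \<le> B"
  shows "\<exists>l. \<forall>r>0. Kt r = l"
proof -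
  define H where "H = radial_weight Kt (real d + \<alpha>)"
  have decay: "power_decay ((real d + \<alpha>)/2) H"
    unfolding H_def by (rule power_decay_radial_weight) fact+
  have "(real d + \<alpha>)/2 > real d / 2"
    using \<open>\<alpha> > 0\<close> by simp
  obtain c where "\<forall>\<rho>>0. \<bar>(abel_transform ^^ d) H \<rho>\<bar> powr (-1/\<alpha>) = c * sqrt \<rho>"
    using distance_exact_radial_abel_law[OF assms(1-3) radial] decay unfolding H_def by blast
  moreover have "continuous_on {0<..} ((abel_transform ^^ d) H)"
    using power_decay_abel_transform_iterate[OF decay \<open>(real d + \<alpha>)/2 > real d / 2\<close>]
    unfolding power_decay_def by blast
  ultimately obtain \<mu> where "\<And>\<rho>. \<rho> > 0 \<Longrightarrow> (abel_transform ^^ d) H \<rho> = \<mu> * \<rho> powr -(\<alpha>/2)"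
    using powr_law_if_abs_powr_law[OF _ \<open>\<alpha> > 0\<close>] by blast
  moreover have "real d / 2 - (real d + \<alpha>)/2 = -(\<alpha>/2)"
    by (simp add: field_simps)
  ultimately obtain l where l: "\<And>q. q > 0 \<Longrightarrow> H q = l * q powr -((real d + \<alpha>)/2)"
    using eq_powr_if_abel_transform_iterate_eq_powr[OF decay \<open>(real d + \<alpha>)/2 > real d / 2\<close>, of \<mu>]
    by auto
  have "Kt r = l" if "r > 0" for r
    using l[of "r\<^sup>2"] that by (simp add: H_def radial_weight_def)
  then show ?thesis
    by blast
qed

theorem theorem2p5:
  fixes K :: "real ^ 'n \<Rightarrow> real" and d :: nat and \<alpha> :: real
  assumes "1 \<le> d" and "d < CARD('n)" and "\<alpha> > 0"
    and "continuous_on (UNIV - {0}) K"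
    and "bounded (K ` (UNIV - {0}))"
    and "distance_exact K d \<alpha>"
    and "\<exists>Kt :: real \<Rightarrow> real. continuous_on {0<..} Kt \<and> bounded (Kt ` {0<..}) \<and>
           (\<forall>x. K x = Kt (norm x))"
  shows "\<exists>c. \<forall>x. x \<noteq> 0 \<longrightarrow> K x = c"
proof -
  obtain Kt :: "real \<Rightarrow> real" where cont: "continuous_on {0<..} Kt" and "bounded (Kt ` {0<..})"
    and radial: "\<And>x. K x = Kt (norm x)"
    using assms(7) by blast
  then obtain B where bound: "\<And>r. r > 0 \<Longrightarrow> \<bar>Kt r\<bar> \<le> B"
    unfolding bounded_real by auto
  have "d < DIM(real ^ 'n)"
    using assms(2) by simp
  then obtain l where "\<forall>r>0. Kt r = l"
    using radial_profile_constant_if_distance_exact[OF _ assms(3,6) radial cont bound] by blast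
  then show ?thesis
    using radial by auto
qed

end
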